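(* Let $a>0$, $N>0$, $a_1=a$, $a_2=0$, $a_3=-a$, and let $n_1,n_2,n_3\ge 1$ be integers with $n=n_1+n_2+n_3$. Let $\omega_j(x)=e^{-N(x^2/2-a_jx)}$, $j=1,2,3$. Let $P_{n_1,n_2,n_3}(x)=x^n+\dots$ be the monic polynomial of degree $n$ satisfying $\int_{\mathbb R}P_{n_1,n_2,n_3}(x)x^k\omega_j(x)\,dx=0$ for $0\le k\le n_j-1$, $j=1,2,3$. Put $h^{(j)}_{k_1,k_2,k_3}=\int_{\mathbb R}P_{k_1,k_2,k_3}(x)x^{k_j}\omega_j(x)\,dx$ and $c_1=-2\pi i/h^{(1)}_{n_1-1,n_2,n_3}$, $c_2=-2\pi i/h^{(2)}_{n_1,n_2-1,n_3}$, $c_3=-2\pi i/h^{(3)}_{n_1,n_2,n_3-1}$ (these $h$'s are nonzero). Let $Y$ be the $4\times4$ matrix $$Y=\begin{pmatrix}P_{n_1,n_2,n_3}&C(P_{n_1,n_2,n_3}\omega_1)&C(P_{n_1,n_2,n_3}\omega_2)&C(P_{n_1,n_2,n_3}\omega_3)\\ c_1P_{n_1-1,n_2,n_3}&c_1C(P_{n_1-1,n_2,n_3}\omega_1)&c_1C(P_{n_1-1,n_2,n_3}\omega_2)&c_1C(P_{n_1-1,n_2,n_3}\omega_3)\\ c_2P_{n_1,n_2-1,n_3}&\cdots&&\\ c_3P_{n_1,n_2,n_3-1}&\cdots&&\end{pmatrix}$$ (rows 3 and 4 built as row 2 with $(P_{n_1,n_2-1,n_3},c_2)$ resp. $(P_{n_1,n_2,n_3-1},c_3)$),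 where $Cf(z)=\frac{1}{2\pi i}\int_{\mathbb R}\frac{f(s)}{s-z}ds$. Define, for $z\in\mathbb C\setminus\mathbb R$, $$\Psi(z)=\mathrm{diag}(1,c_1^{-1},c_2^{-1},c_3^{-1})\,Y(z)\,\mathrm{diag}\big(e^{-Nz^2/2},e^{-Na_1z},e^{-Na_2z},e^{-Na_3z}\big).$$ Then $$\Psi'(z)=N\begin{pmatrix}-z&\frac{n_1}{N}&\frac{n_2}{N}&\frac{n_3}{N}\\-1&-a&0&0\\-1&0&0&0\\-1&0&0&a\end{pmatrix}\Psi(z),\qquad z\in\mathbb C\setminus\mathbb R .$$
   Context: $Y$ is the unique solution of the Riemann–Hilbert problem: $Y$ analytic on $\mathbb C\setminus\mathbb R$, $Y_+(x)=Y_-(x)\begin{pmatrix}1&\omega_1(x)&\omega_2(x)&\omega_3(x)\\0&1&0&0\\0&0&1&0\\0&0&0&1\end{pmatrix}$ for $x\in\mathbb R$ (boundary values from the upper/lower half plane), and $Y(z)=(I+O(1/z))\,\mathrm{diag}(z^n,z^{-n_1},z^{-n_2},z^{-n_3})$ as $z\to\infty$. The prime denotes $d/dz$. *)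

theory Defs
  imports "HOL-Analysis.Analysis" "HOL-Computational_Algebra.Polynomial"
begin

definition shift :: "real \<Rightarrow> nat \<Rightarrow> real" where
  "shift a j = (if j = 1 then a else if j = 2 then 0 else - a)"

definition wt :: "real \<Rightarrow> real \<Rightarrow> nat \<Rightarrow> real \<Rightarrow> real" where
  "wt a N j x = exp (- N * (x^2 / 2 - shift a j * x))"

definition sel :: "nat \<Rightarrow> nat \<Rightarrow> nat \<Rightarrow> nat \<Rightarrow> nat" where
  "sel j k1 k2 k3 = (if j = 1 then k1 else if j = 2 then k2 else k3)"

definition mop :: "real \<Rightarrow> real \<Rightarrow> nat \<Rightarrow> nat \<Rightarrow> nat \<Rightarrow> real poly" where
  "mop a N k1 k2 k3 = (THE p. degree p = k1 + k2 + k3 \<and> lead_coeff p = 1 \<and>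
     (\<forall>j\<in>{1,2,3}. \<forall>k < sel j k1 k2 k3.
        (\<integral>x. poly p x * x ^ k * wt a N j x \<partial>lborel) = 0))"

definition hh :: "real \<Rightarrow> real \<Rightarrow> nat \<Rightarrow> nat \<Rightarrow> nat \<Rightarrow> nat \<Rightarrow> real" where
  "hh a N j k1 k2 k3 =
     (\<integral>x. poly (mop a N k1 k2 k3) x * x ^ (sel j k1 k2 k3) * wt a N j x \<partial>lborel)"

definition cauchy_tr :: "(real \<Rightarrow> complex) \<Rightarrow> complex \<Rightarrow> complex" where
  "cauchy_tr f z = (1 / (2 * of_real pi * \<i>)) * (\<integral>s. f s / (of_real s - z) \<partial>lborel)"

text \<open>4x4 matrices as functions on indices 0..3.\<close>
definition mmul :: "(nat \<Rightarrow> nat \<Rightarrow> complex) \<Rightarrow> (nat \<Rightarrow> nat \<Rightarrow> complex) \<Rightarrow> nat \<Rightarrow> nat \<Rightarrow> complex" where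
  "mmul A B i j = (\<Sum>k<4. A i k * B k j)"

definition diag4 :: "(nat \<Rightarrow> complex) \<Rightarrow> nat \<Rightarrow> nat \<Rightarrow> complex" where
  "diag4 d i j = (if i = j then d i else 0)"

definition cc :: "real \<Rightarrow> real \<Rightarrow> nat \<Rightarrow> nat \<Rightarrow> nat \<Rightarrow> nat \<Rightarrow> complex" where
  "cc a N n1 n2 n3 j =
     (if j = 1 then - 2 * of_real pi * \<i> / of_real (hh a N 1 (n1 - 1) n2 n3)
      else if j = 2 then - 2 * of_real pi * \<i> / of_real (hh a N 2 n1 (n2 - 1) n3)
      else - 2 * of_real pi * \<i> / of_real (hh a N 3 n1 n2 (n3 - 1)))"

definition rowpoly :: "real \<Rightarrow> real \<Rightarrow> nat \<Rightarrow> nat \<Rightarrow> nat \<Rightarrow> nat \<Rightarrow> real poly" where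
  "rowpoly a N n1 n2 n3 r =
     (if r = 0 then mop a N n1 n2 n3
      else if r = 1 then mop a N (n1 - 1) n2 n3
      else if r = 2 then mop a N n1 (n2 - 1) n3
      else mop a N n1 n2 (n3 - 1))"

definition rowfac :: "real \<Rightarrow> real \<Rightarrow> nat \<Rightarrow> nat \<Rightarrow> nat \<Rightarrow> nat \<Rightarrow> complex" where
  "rowfac a N n1 n2 n3 r = (if r = 0 then 1 else cc a N n1 n2 n3 r)"

definition Ymat :: "real \<Rightarrow> real \<Rightarrow> nat \<Rightarrow> nat \<Rightarrow> nat \<Rightarrow> complex \<Rightarrow> nat \<Rightarrow> nat \<Rightarrow> complex" where
  "Ymat a N n1 n2 n3 z r col =
     rowfac a N n1 n2 n3 r *
     (if col = 0 then poly (map_poly of_real (rowpoly a N n1 n2 n3 r)) z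
      else cauchy_tr (\<lambda>s. of_real (poly (rowpoly a N n1 n2 n3 r) s * wt a N col s)) z)"

definition Psi :: "real \<Rightarrow> real \<Rightarrow> nat \<Rightarrow> nat \<Rightarrow> nat \<Rightarrow> complex \<Rightarrow> nat \<Rightarrow> nat \<Rightarrow> complex" where
  "Psi a N n1 n2 n3 z =
     mmul (mmul (diag4 (\<lambda>i. if i = 0 then 1 else inverse (cc a N n1 n2 n3 i)))
                (Ymat a N n1 n2 n3 z))
          (diag4 (\<lambda>i. if i = 0 then exp (- of_real N * z^2 / 2)
                      else exp (- of_real N * of_real (shift a i) * z)))"

definition Amat :: "real \<Rightarrow> real \<Rightarrow> nat \<Rightarrow> nat \<Rightarrow> nat \<Rightarrow> complex \<Rightarrow> nat \<Rightarrow> nat \<Rightarrow> complex" where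
  "Amat a N n1 n2 n3 z i j = of_real N *
     (if i = 0 then (if j = 0 then - z else if j = 1 then of_nat n1 / of_real N
                     else if j = 2 then of_nat n2 / of_real N else of_nat n3 / of_real N)
      else if j = 0 then -1
      else if i = 1 \<and> j = 1 then - of_real a
      else if i = 3 \<and> j = 3 then of_real a
      else 0)"

end

theory Submission
  imports Defs "HOL-Computational_Algebra.Polynomial_Factorial" "HOL-Computational_Algebra.Field_as_Ring"
    "HOL-Probability.Distributions" "HOL-Real_Asymp.Real_Asymp"
begin

text \<open>
  Write w_c(x) = exp(-N(x^2/2 - c x)) and let H = exp(D^2/(2N)) be the heat operator on
  polynomials. Integration by parts shows that the w_c-integral of p is (H p)(c) times the
  integral of w_c, and H turns multiplication by x into x + D/N. Hence p is w_c-orthogonal to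
  1, ..., x^(m-1) iff (x - c)^m divides H p, which forces H P_{n1,n2,n3} = (x-a)^n1 x^n2 (x+a)^n3.
  As H is a degree-preserving bijection commuting with D, this gives the relations
  P_n = (x - a_j) P_{n-e_j} - P_{n-e_j}'/N and P_n' = sum_j n_j P_{n-e_j}, and shows h_{n-e_j} \<noteq> 0.
  For the Cauchy transforms, integration by parts gives (C(p w_c))' = C((p' - N(x - c)p) w_c), and
  C(x p w_c)(z) = z C(p w_c)(z) + (2 pi i)^-1 * integral of p w_c, the last term vanishing for p = P_n.
  So differentiating an entry of Psi replaces its polynomial p by p' - N x p, and the relations above
  rewrite this in terms of the rows of Psi.
\<close>

section \<open>The heat operator on polynomials\<close>

lemma smult_sum_right: "smult c (\<Sum>k\<in>A. f k) = (\<Sum>k\<in>A. smult c (f k))"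
  by (induction A rule: infinite_finite_induct) (simp_all add: smult_add_right)

lemma pderiv_sum: "pderiv (\<Sum>k\<in>A. f k) = (\<Sum>k\<in>A. pderiv (f k))"
  by (induction A rule: infinite_finite_induct) (simp_all add: pderiv_add)

lemma higher_pderiv_eq_0: "degree p < m \<Longrightarrow> (pderiv ^^ m) p = 0"
  by (intro poly_eqI) (simp add: coeff_higher_pderiv coeff_eq_0)

lemma higher_pderiv_mult_x:
  fixes p :: "'a::idom poly"
  shows "(pderiv ^^ m) ([:0,1:] * p) = [:0,1:] * (pderiv ^^ m) p + smult (of_nat m) ((pderiv ^^ (m - 1)) p)"
proof (induction m)
  case (Suc m)
  show ?case
  proof (cases m)
    case (Suc m')
    have "(pderiv ^^ Suc m) ([:0,1:] * p) = pderiv ([:0,1:] * (pderiv ^^ m) p + smult (of_nat m) ((pderiv ^^ (m - 1)) p))"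
      by (simp only: funpow.simps comp_apply Suc.IH)
    also have "\<dots> = (pderiv ^^ m) p + [:0,1:] * (pderiv ^^ Suc m) p + smult (of_nat m) ((pderiv ^^ m) p)"
      using Suc by (simp add: pderiv_add pderiv_mult pderiv_smult pderiv_pCons)
    also have "\<dots> = [:0,1:] * (pderiv ^^ Suc m) p + smult (of_nat (Suc m)) ((pderiv ^^ m) p)"
      by (simp add: algebra_simps smult_add_left)
    finally show ?thesis by simp
  qed (simp add: pderiv_mult pderiv_pCons)
qed simp

definition heat_trunc :: "real \<Rightarrow> nat \<Rightarrow> real poly \<Rightarrow> real poly" where
  "heat_trunc N B p = (\<Sum>k<B. smult (1 / ((2*N)^k * fact k)) ((pderiv ^^ (2*k)) p))"

definition heat :: "real \<Rightarrow> real poly \<Rightarrow> real poly" where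
  "heat N p = heat_trunc N (Suc (degree p)) p"

lemma heat_trunc_eq_heat: assumes "degree p < B" shows "heat_trunc N B p = heat N p"
proof -
  have "heat_trunc N B p = (\<Sum>k<Suc (degree p). smult (1 / ((2*N)^k * fact k)) ((pderiv ^^ (2*k)) p))"
    unfolding heat_trunc_def
    by (rule sum.mono_neutral_right) (use assms in \<open>auto intro!: higher_pderiv_eq_0\<close>)
  then show ?thesis by (simp add: heat_def heat_trunc_def)
qed

lemma heat_add: "heat N (p + q) = heat N p + heat N q"
proof -
  define B where "B = Suc (degree p + degree q)"
  have "degree (p + q) < B" "degree p < B" "degree q < B"
    unfolding B_def using degree_add_le_max[of p q] by auto
  then show ?thesis
    by (simp flip: heat_trunc_eq_heat
        add: heat_trunc_def higher_pderiv_add sum.distrib smult_add_right)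
qed

lemma heat_smult: "heat N (smult c p) = smult c (heat N p)"
proof -
  have "degree (smult c p) < Suc (degree p)" by (simp add: le_imp_less_Suc)
  then have "heat N (smult c p) = heat_trunc N (Suc (degree p)) (smult c p)"
    by (simp add: heat_trunc_eq_heat)
  then show ?thesis
    unfolding heat_def heat_trunc_def
    by (simp only: higher_pderiv_smult smult_sum_right smult_smult mult.commute)
qed

lemma heat_diff: "heat N (p - q) = heat N p - heat N q"
  using heat_add[of N p "smult (-1) q"] heat_smult[of N "-1" q] by simp

lemma heat_pderiv: "heat N (pderiv p) = pderiv (heat N p)"
proof -
  have "degree (pderiv p) < Suc (degree p)" by (simp add: degree_pderiv)
  then have "heat N (pderiv p) = heat_trunc N (Suc (degree p)) (pderiv p)"
    by (simp add: heat_trunc_eq_heat)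
  then show ?thesis
    unfolding heat_def heat_trunc_def by (simp only: pderiv_sum pderiv_smult funpow_swap1)
qed

lemma coeff_heat: assumes "degree p \<le> n" shows "coeff (heat N p) n = coeff p n"
proof -
  have "coeff ((pderiv ^^ (2*k)) p) n = 0" if "k > 0" for k
    using that assms by (simp add: coeff_higher_pderiv coeff_eq_0)
  then have "coeff (heat N p) n = (\<Sum>k\<in>{0}. (1 / ((2*N)^k * fact k)) * coeff ((pderiv ^^ (2*k)) p) n)"
    unfolding heat_def heat_trunc_def coeff_sum coeff_smult
    by (intro sum.mono_neutral_right) auto
  then show ?thesis by simp
qed

lemma degree_heat: "degree (heat N p) = degree p"
proof (cases "p = 0")
  case True then show ?thesis by (simp add: heat_def heat_trunc_def)
next
  case False
  have "degree (heat N p) \<le> degree p"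
    by (rule degree_le) (simp add: coeff_heat coeff_eq_0)
  moreover have "coeff (heat N p) (degree p) \<noteq> 0" using False by (simp add: coeff_heat)
  ultimately show ?thesis by (meson antisym le_degree)
qed

lemma lead_coeff_heat: "lead_coeff (heat N p) = lead_coeff p"
  by (simp add: degree_heat coeff_heat)

lemma heat_inj: assumes "heat N p = heat N q" shows "p = q"
proof -
  have "lead_coeff (p - q) = 0"
    using assms lead_coeff_heat[of N "p - q"] by (simp add: heat_diff)
  then show ?thesis by (metis leading_coeff_0_iff right_minus_eq)
qed

lemma heat_pCons_0: "heat N [:b:] = [:b:]"
  by (rule poly_eqI) (simp add: coeff_heat)

lemma heat_surj: "\<exists>p. heat N p = G"
proof (induction "degree G" arbitrary: G rule: less_induct)
  case less
  show ?case
  proof (cases "degree G")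
    case 0
    then have "heat N G = G" using heat_pCons_0[of N "coeff G 0"] by (simp add: degree_0_id)
    then show ?thesis by blast
  next
    case (Suc d)
    \<comment> \<open>\<open>heat\<close> is the identity plus an operator lowering the degree\<close>
    have "degree (G - heat N G) \<le> d"
      by (rule degree_le) (use Suc in \<open>simp add: coeff_heat\<close>)
    then obtain r where "heat N r = G - heat N G" using less Suc by fastforce
    then have "heat N (G + r) = G" by (simp add: heat_add)
    then show ?thesis by blast
  qed
qed

text \<open>Conjugating multiplication by \<open>x\<close> with \<open>heat N\<close> gives \<open>x + D/N\<close>.\<close>
definition heat_x :: "real \<Rightarrow> real poly \<Rightarrow> real poly" where
  "heat_x N f = [:0,1:] * f + smult (1/N) (pderiv f)"

lemma heat_coeff_step:
  fixes N :: real assumes "N \<noteq> 0"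
  shows "1 / ((2*N)^Suc k * fact (Suc k)) * of_nat (2 * Suc k) = (1/N) * (1 / ((2*N)^k * fact k))"
proof -
  have e: "(2*N)^Suc k * fact (Suc k) = N * ((2*N)^k * fact k) * of_nat (2 * Suc k)"
    by (simp add: fact_Suc algebra_simps)
  have "of_nat (2 * Suc k) \<noteq> (0::real)" by (simp del: of_nat_Suc)
  then show ?thesis unfolding e by simp
qed

lemma heat_mult_x: assumes "N \<noteq> 0" shows "heat N ([:0,1:] * p) = heat_x N (heat N p)"
proof -
  define d where "d = degree p"
  define c where "c = (\<lambda>k::nat. 1 / ((2*N)^k * fact k))"
  have "degree ([:0,1:] * p) < Suc (Suc d)"
    unfolding d_def using degree_mult_le[of "[:0,1:]" p] by simp
  then have "heat N ([:0,1:] * p) = heat_trunc N (Suc (Suc d)) ([:0,1:] * p)"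
    by (simp add: heat_trunc_eq_heat)
  also have "\<dots> = (\<Sum>k<Suc (Suc d). smult (c k) ([:0,1:] * (pderiv ^^ (2*k)) p))
                 + (\<Sum>k<Suc (Suc d). smult (c k * of_nat (2*k)) ((pderiv ^^ (2*k - 1)) p))"
    unfolding heat_trunc_def sum.distrib[symmetric]
    by (rule sum.cong) (simp_all only: higher_pderiv_mult_x c_def smult_add_right smult_smult of_nat_mult)
  also have "(\<Sum>k<Suc (Suc d). smult (c k) ([:0,1:] * (pderiv ^^ (2*k)) p)) = [:0,1:] * heat_trunc N (Suc (Suc d)) p"
    unfolding heat_trunc_def c_def by (simp only: sum_distrib_left mult_smult_right)
  also have "heat_trunc N (Suc (Suc d)) p = heat N p" by (simp add: heat_trunc_eq_heat d_def)
  also have "(\<Sum>k<Suc (Suc d). smult (c k * of_nat (2*k)) ((pderiv ^^ (2*k - 1)) p))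
       = (\<Sum>k<Suc d. smult (c (Suc k) * of_nat (2 * Suc k)) ((pderiv ^^ (2 * Suc k - 1)) p))"
    by (subst sum.lessThan_Suc_shift) simp
  also have "\<dots> = (\<Sum>k<Suc d. smult (1/N) (pderiv (smult (c k) ((pderiv ^^ (2*k)) p))))"
  proof (rule sum.cong)
    fix k
    have "c (Suc k) * of_nat (2 * Suc k) = (1/N) * c k"
      using heat_coeff_step[OF assms] by (simp only: c_def)
    then show "smult (c (Suc k) * of_nat (2 * Suc k)) ((pderiv ^^ (2 * Suc k - 1)) p) =
        smult (1/N) (pderiv (smult (c k) ((pderiv ^^ (2*k)) p)))"
      by (simp add: pderiv_smult)
  qed simp
  also have "\<dots> = smult (1/N) (pderiv (heat N p))"
    unfolding heat_def heat_trunc_def c_def d_def by (simp only: pderiv_sum smult_sum_right)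
  finally show ?thesis by (simp add: heat_x_def)
qed

lemma heat_mult_x_power:
  assumes "N \<noteq> 0" shows "heat N ([:0,1:]^k * p) = (heat_x N ^^ k) (heat N p)"
proof (induction k)
  case (Suc k)
  have "heat N ([:0,1:]^Suc k * p) = heat N ([:0,1:] * ([:0,1:]^k * p))" by (simp add: mult.assoc)
  then show ?case using Suc heat_mult_x[OF assms] by simp
qed simp

section \<open>Gaussian integrals of polynomials\<close>

definition gauss :: "real \<Rightarrow> real \<Rightarrow> real \<Rightarrow> real" where
  "gauss N c x = exp (- N * (x^2/2 - c*x))"

lemma wt_eq_gauss: "wt a N j = gauss N (shift a j)"
  by (simp add: fun_eq_iff wt_def gauss_def)

lemma gauss_eq_normal_density: assumes "N > 0"
  shows "gauss N c x = exp (N*c^2/2) * sqrt (2*pi/N) * normal_density c (1 / sqrt N) x"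
proof -
  have s: "(1 / sqrt N)^2 = 1/N" using assms by (simp add: power_divide)
  have a: "1 / sqrt (2 * pi * (1/N)) = 1 / sqrt (2*pi/N)" by simp
  have b: "sqrt (2*pi/N) * (1 / sqrt (2*pi/N)) = 1" using assms by simp
  have c: "- N * (x^2/2 - c*x) = N*c^2/2 + (- ((x - c)^2) / (2 * (1/N)))"
    using assms by (simp add: field_simps power2_eq_square)
  show ?thesis
    unfolding normal_density_def s a gauss_def c exp_add using b assms by (simp add: algebra_simps)
qed

lemma integral_gauss_pos: assumes "N > 0" shows "(\<integral>x. gauss N c x \<partial>lborel) > 0"
  using assms by (simp add: gauss_eq_normal_density)

lemma integrable_poly_gauss: assumes "N > 0"
  shows "integrable lborel (\<lambda>x. poly p x * gauss N c x)"
proof -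
  define q where "q = pcompose p [:c,1:]"
  define K where "K = exp (N*c^2/2) * sqrt (2*pi/N)"
  have "poly p x * gauss N c x = (\<Sum>i\<le>degree q. (coeff q i * K) * (normal_density c (1 / sqrt N) x * (x - c)^i))" for x
  proof -
    have "poly p x * gauss N c x = poly q (x - c) * (K * normal_density c (1 / sqrt N) x)"
      using assms by (simp add: q_def poly_pcompose gauss_eq_normal_density K_def)
    then show ?thesis
      by (simp only: poly_altdef sum_distrib_right) (simp add: mult_ac)
  qed
  then show ?thesis
    by (simp only:) (rule Bochner_Integration.integrable_sum,
        use assms in \<open>intro integrable_mult_right integrable_normal_moment; simp\<close>)
qed

lemma tendsto_poly_gauss: assumes "N > 0"
  shows "((\<lambda>x. poly p x * gauss N c x) \<longlongrightarrow> 0) at_top"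
    and "((\<lambda>x. poly p x * gauss N c x) \<longlongrightarrow> 0) at_bot"
proof -
  have e: "poly p x * gauss N c x = (\<Sum>i\<le>degree p. coeff p i * (x^i * exp (- N * (x^2/2 - c*x))))" for x
    by (simp add: poly_altdef gauss_def sum_distrib_right algebra_simps)
  have "((\<lambda>x::real. x^k * exp (- N * (x^2/2 - c*x))) \<longlongrightarrow> 0) at_top" for k
    using assms by real_asymp
  then show "((\<lambda>x. poly p x * gauss N c x) \<longlongrightarrow> 0) at_top"
    unfolding e by (intro tendsto_null_sum tendsto_mult_right_zero)
  have "((\<lambda>x::real. x^k * exp (- N * (x^2/2 - c*x))) \<longlongrightarrow> 0) at_bot" for k
    using assms by real_asymp
  then show "((\<lambda>x. poly p x * gauss N c x) \<longlongrightarrow> 0) at_bot"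
    unfolding e by (intro tendsto_null_sum tendsto_mult_right_zero)
qed

lemma integral_lborel_derivative_eq_0:
  fixes F f :: "real \<Rightarrow> 'a::euclidean_space"
  assumes "\<And>x. (F has_vector_derivative f x) (at x)" "\<And>x. isCont f x" "integrable lborel f"
    and "(F \<longlongrightarrow> 0) at_top" "(F \<longlongrightarrow> 0) at_bot"
  shows "(\<integral>x. f x \<partial>lborel) = 0"
proof -
  have "(LBINT x=-\<infinity>..\<infinity>. f x) = 0 - 0"
  proof (rule interval_integral_FTC_integrable)
    show "set_integrable lborel (einterval (-\<infinity>) \<infinity>) f"
      using assms(3) by (simp add: set_integrable_def)
    show "((F \<circ> real_of_ereal) \<longlongrightarrow> 0) (at_right (-\<infinity>))"
      using assms(5) by (simp add: ereal_tendsto_simps1)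
    show "((F \<circ> real_of_ereal) \<longlongrightarrow> 0) (at_left \<infinity>)"
      using assms(4) by (simp add: ereal_tendsto_simps1)
  qed (use assms in auto)
  then show ?thesis
    by (simp add: interval_lebesgue_integral_def set_lebesgue_integral_def)
qed

text \<open>\<open>gauss_deriv N c p\<close> is the polynomial \<open>q\<close> with \<open>(p \<omega>)' = q \<omega>\<close> for \<open>\<omega> = gauss N c\<close>.\<close>
definition gauss_deriv :: "real \<Rightarrow> real \<Rightarrow> real poly \<Rightarrow> real poly" where
  "gauss_deriv N c p = pderiv p - smult N ([:-c,1:] * p)"

lemma has_real_derivative_poly_gauss:
  "((\<lambda>x. poly p x * gauss N c x) has_real_derivative poly (gauss_deriv N c p) x * gauss N c x) (at x)"
proof -
  have "((\<lambda>x::real. x^2/2 - c*x) has_real_derivative (x - c)) (at x)"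
    using DERIV_diff[OF DERIV_divide[OF DERIV_pow[of 2 x] DERIV_const[of 2]] DERIV_cmult[OF DERIV_ident, of c]]
    by simp
  from DERIV_exp[THEN DERIV_chain2, OF DERIV_cmult[OF this, of "- N"]]
  have "(gauss N c has_real_derivative - N * (x - c) * gauss N c x) (at x)"
    unfolding gauss_def by (simp add: mult_ac)
  from DERIV_mult[OF poly_DERIV this] show ?thesis
    by (simp add: gauss_deriv_def algebra_simps)
qed

lemma integral_gauss_deriv: assumes "N > 0"
  shows "(\<integral>x. poly (gauss_deriv N c p) x * gauss N c x \<partial>lborel) = 0"
proof (rule integral_lborel_derivative_eq_0)
  show "((\<lambda>x. poly p x * gauss N c x) has_vector_derivative poly (gauss_deriv N c p) x * gauss N c x) (at x)" for x
    using has_real_derivative_poly_gauss by (simp add: has_real_derivative_iff_has_vector_derivative)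
  show "isCont (\<lambda>x. poly (gauss_deriv N c p) x * gauss N c x) x" for x
    unfolding gauss_def by (intro continuous_intros) auto
qed (simp_all add: assms integrable_poly_gauss tendsto_poly_gauss)

lemma integral_x_poly_gauss: assumes "N > 0"
  shows "(\<integral>x. x * (poly q x * gauss N c x) \<partial>lborel)
    = c * (\<integral>x. poly q x * gauss N c x \<partial>lborel) + (\<integral>x. poly (pderiv q) x * gauss N c x \<partial>lborel) / N"
proof -
  define f where "f = (\<lambda>x. poly q x * gauss N c x)"
  define f' where "f' = (\<lambda>x. poly (pderiv q) x * gauss N c x)"
  define g where "g = (\<lambda>x. x * f x)"
  have f: "integrable lborel f" and f': "integrable lborel f'"
    unfolding f_def f'_def by (rule integrable_poly_gauss[OF assms])+
  have g: "integrable lborel g"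
    using integrable_poly_gauss[OF assms, of "[:0,1:] * q" c] by (simp add: g_def f_def mult.assoc)
  have "(\<integral>x. f' x \<partial>lborel) - N * (\<integral>x. g x \<partial>lborel) + N * c * (\<integral>x. f x \<partial>lborel)
      = (\<integral>x. (f' x - N * g x) + N * c * f x \<partial>lborel)"
    using f f' g by (simp add: Bochner_Integration.integral_add Bochner_Integration.integral_diff)
  also have "\<dots> = (\<integral>x. poly (gauss_deriv N c q) x * gauss N c x \<partial>lborel)"
    unfolding f_def f'_def g_def gauss_deriv_def by (simp add: algebra_simps)
  also have "\<dots> = 0"
    by (rule integral_gauss_deriv[OF assms])
  finally have "(\<integral>x. g x \<partial>lborel) = c * (\<integral>x. f x \<partial>lborel) + (\<integral>x. f' x \<partial>lborel) / N"
    using assms by (simp add: field_simps)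
  then show ?thesis by (simp add: f_def f'_def g_def)
qed

lemma integral_poly_gauss_heat: assumes "N > 0"
  shows "(\<integral>x. poly p x * gauss N c x \<partial>lborel) = (\<integral>x. gauss N c x \<partial>lborel) * poly (heat N p) c"
proof (induction "degree p" arbitrary: p rule: less_induct)
  case less
  show ?case
  proof (cases "degree p")
    case 0
    define b where "b = coeff p 0"
    have p: "p = [:b:]" using 0 by (simp add: b_def degree_0_id)
    show ?thesis unfolding p heat_pCons_0 by (simp add: mult.commute)
  next
    case (Suc d)
    obtain b q where p: "p = pCons b q" by (cases p)
    have dq: "degree q < degree p" using Suc p by (cases "q = 0") auto
    then have "degree (pderiv q) < degree p" by (simp add: degree_pderiv)
    note IH = less(1)[OF dq] less(1)[OF this]
    have ig: "integrable lborel (\<lambda>x. b * gauss N c x)"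
      using integrable_poly_gauss[OF assms, of "[:b:]" c] by simp
    have ixq: "integrable lborel (\<lambda>x. x * (poly q x * gauss N c x))"
      using integrable_poly_gauss[OF assms, of "[:0,1:] * q" c] by (simp add: mult.assoc)
    have "poly p x * gauss N c x = b * gauss N c x + x * (poly q x * gauss N c x)" for x
      by (simp add: p algebra_simps)
    then have "(\<integral>x. poly p x * gauss N c x \<partial>lborel)
        = b * (\<integral>x. gauss N c x \<partial>lborel) + (\<integral>x. x * (poly q x * gauss N c x) \<partial>lborel)"
      using ig ixq by (simp add: Bochner_Integration.integral_add)
    also have "\<dots> = (\<integral>x. gauss N c x \<partial>lborel) * (b + c * poly (heat N q) c + poly (heat N (pderiv q)) c / N)"
      unfolding integral_x_poly_gauss[OF assms] IH by (simp add: algebra_simps)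
    also have "b + c * poly (heat N q) c + poly (heat N (pderiv q)) c / N = poly (heat N p) c"
    proof -
      have "p = [:b:] + [:0,1:] * q" by (simp add: p)
      then have "heat N p = heat N [:b:] + heat N ([:0,1:] * q)" by (simp only: heat_add)
      also have "\<dots> = [:b:] + heat_x N (heat N q)" using assms heat_mult_x[of N q] by (simp add: heat_pCons_0)
      finally have "heat N p = [:b:] + heat_x N (heat N q)" .
      then show ?thesis by (simp add: heat_x_def heat_pderiv)
    qed
    finally show ?thesis .
  qed
qed

section \<open>Orthogonality as divisibility\<close>

lemma pderiv_linear_poly: "pderiv [:b,1:] = 1"
  by (simp add: pderiv_pCons)

lemma heat_x_dvd: assumes "[:-c,1:]^Suc r dvd G" shows "[:-c,1:]^r dvd heat_x N G"
proof -
  obtain Q where G: "G = [:-c,1:]^Suc r * Q" using assms by blast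
  have l: "[:-c,1:]^r dvd [:-c,1:]^Suc r" by (rule le_imp_power_dvd) simp
  have "pderiv G = [:-c,1:]^Suc r * pderiv Q + Q * (smult (of_nat (Suc r)) ([:-c,1:]^r) * pderiv [:-c,1:])"
    unfolding G by (simp only: pderiv_mult pderiv_power_Suc)
  then have "[:-c,1:]^r dvd pderiv G"
    by (simp only:) (intro dvd_add dvd_mult2 dvd_mult dvd_smult l dvd_refl)
  moreover have "[:-c,1:]^r dvd [:0,1:] * G" using l assms by (meson dvd_mult dvd_trans)
  ultimately show ?thesis unfolding heat_x_def by (intro dvd_add dvd_smult)
qed

lemma heat_x_power_dvd:
  assumes "[:-c,1:]^m dvd G" "k \<le> m" shows "[:-c,1:]^(m-k) dvd (heat_x N ^^ k) G"
  using assms(2)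
proof (induction k)
  case (Suc k)
  then have "[:-c,1:]^Suc (m - Suc k) dvd (heat_x N ^^ k) G" by (simp add: Suc_diff_Suc)
  then show ?case by (simp add: heat_x_dvd)
qed (use assms(1) in simp)

lemma heat_x_mult_lin_power:
  "heat_x N ([:-c,1:]^Suc s * R)
    = [:-c,1:]^s * ([:0,1:] * [:-c,1:] * R + smult (1/N) ([:-c,1:] * pderiv R + smult (of_nat (Suc s)) R))"
proof -
  have "heat_x N ([:-c,1:]^Suc s * R) = [:0,1:] * ([:-c,1:]^Suc s * R)
      + smult (1/N) ([:-c,1:]^Suc s * pderiv R + R * (smult (of_nat (Suc s)) ([:-c,1:]^s) * pderiv [:-c,1:]))"
    unfolding heat_x_def by (simp only: pderiv_mult pderiv_power_Suc)
  then show ?thesis by (simp add: pderiv_linear_poly algebra_simps smult_add_right)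
qed

lemma heat_x_power_mult_lin_power:
  assumes "k \<le> r" "N \<noteq> 0"
  shows "\<exists>R. (heat_x N ^^ k) ([:-c,1:]^r * Q) = [:-c,1:]^(r-k) * R \<and>
            poly R c = fact r / fact (r-k) / N^k * poly Q c"
  using assms(1)
proof (induction k)
  case (Suc k)
  then obtain R where R: "(heat_x N ^^ k) ([:-c,1:]^r * Q) = [:-c,1:]^(r-k) * R"
     "poly R c = fact r / fact (r-k) / N^k * poly Q c" by auto
  define s where "s = r - Suc k"
  have rk: "r - k = Suc s" using Suc.prems s_def by simp
  define R' where "R' = [:0,1:] * [:-c,1:] * R + smult (1/N) ([:-c,1:] * pderiv R + smult (of_nat (Suc s)) R)"
  have "(heat_x N ^^ Suc k) ([:-c,1:]^r * Q) = [:-c,1:]^(r - Suc k) * R'"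
    using R(1) rk heat_x_mult_lin_power[of N c s R] by (simp add: R'_def s_def)
  moreover have "poly R' c = fact r / fact (r - Suc k) / N^Suc k * poly Q c"
  proof -
    have "fact (r - k) = (of_nat (Suc s) :: real) * fact (r - Suc k)" using rk s_def by simp
    moreover have "(of_nat (Suc s) :: real) \<noteq> 0" by (simp del: of_nat_Suc)
    moreover have "1/N * S * (f / (S * F) / N^k * q) = f / F / N^Suc k * q"
      if "S \<noteq> 0" "F \<noteq> 0" for S F f q :: real
      using that assms(2) by (simp add: field_simps)
    ultimately show ?thesis using R(2) by (simp add: R'_def)
  qed
  ultimately show ?case by blast
qed simp

lemma poly_heat_x_power_at_root:
  assumes "N \<noteq> 0" shows "poly ((heat_x N ^^ r) ([:-c,1:]^r * Q)) c = fact r / N^r * poly Q c"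
  using heat_x_power_mult_lin_power[of r r N c Q] assms by auto

lemma heat_x_power_vanish_iff_dvd:
  assumes "N \<noteq> 0" shows "(\<forall>k<m. poly ((heat_x N ^^ k) G) c = 0) \<longleftrightarrow> [:-c,1:]^m dvd G"
proof
  assume dvd: "[:-c,1:]^m dvd G"
  show "\<forall>k<m. poly ((heat_x N ^^ k) G) c = 0"
  proof (intro allI impI)
    fix k assume "k < m"
    then have "[:-c,1:] dvd (heat_x N ^^ k) G"
      using heat_x_power_dvd[OF dvd, of k N] by (meson dvd_power dvd_trans zero_less_diff order.strict_implies_order)
    then show "poly ((heat_x N ^^ k) G) c = 0" by (simp add: poly_eq_0_iff_dvd)
  qed
next
  assume "\<forall>k<m. poly ((heat_x N ^^ k) G) c = 0"
  then show "[:-c,1:]^m dvd G"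
  proof (induction m)
    case (Suc m)
    then obtain Q where G: "G = [:-c,1:]^m * Q" by auto
    have "poly ((heat_x N ^^ m) G) c = 0" using Suc.prems by simp
    then have "poly Q c = 0" using poly_heat_x_power_at_root[OF assms, of m c Q] assms G by simp
    then obtain Q' where "Q = [:-c,1:] * Q'" by (auto simp: poly_eq_0_iff_dvd)
    then have "G = [:-c,1:]^Suc m * Q'" unfolding G by (simp only: power_Suc2 mult.assoc)
    then show ?case by simp
  qed simp
qed

lemma integral_poly_power_gauss: assumes "N > 0"
  shows "(\<integral>x. poly p x * x^k * gauss N c x \<partial>lborel)
    = (\<integral>x. gauss N c x \<partial>lborel) * poly ((heat_x N ^^ k) (heat N p)) c"
proof -
  have "poly p x * x^k * gauss N c x = poly ([:0,1:]^k * p) x * gauss N c x" for x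
    by (simp add: poly_power)
  then have "(\<integral>x. poly p x * x^k * gauss N c x \<partial>lborel) = (\<integral>x. poly ([:0,1:]^k * p) x * gauss N c x \<partial>lborel)"
    by presburger
  also have "\<dots> = (\<integral>x. gauss N c x \<partial>lborel) * poly (heat N ([:0,1:]^k * p)) c"
    by (rule integral_poly_gauss_heat[OF assms])
  also have "heat N ([:0,1:]^k * p) = (heat_x N ^^ k) (heat N p)"
    using assms by (intro heat_mult_x_power) simp
  finally show ?thesis .
qed

lemma gauss_orthogonal_iff_dvd_heat: assumes "N > 0"
  shows "(\<forall>k<m. (\<integral>x. poly p x * x^k * gauss N c x \<partial>lborel) = 0) \<longleftrightarrow> [:-c,1:]^m dvd heat N p"
  using integral_poly_power_gauss[OF assms] integral_gauss_pos[OF assms, of c]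
    heat_x_power_vanish_iff_dvd[of N m "heat N p" c] assms
  by simp

lemma gauss_moment_nonzero:
  assumes "N > 0" "heat N p = [:-c,1:]^m * Q" "poly Q c \<noteq> 0"
  shows "(\<integral>x. poly p x * x^m * gauss N c x \<partial>lborel) \<noteq> 0"
  using integral_poly_power_gauss[OF assms(1)] integral_gauss_pos[OF assms(1), of c]
    poly_heat_x_power_at_root[of N m c Q] assms
  by simp

section \<open>The multiple orthogonal polynomials\<close>

definition node_poly :: "real \<Rightarrow> nat \<Rightarrow> nat \<Rightarrow> nat \<Rightarrow> real poly" where
  "node_poly a k1 k2 k3 = [:-a,1:]^k1 * [:0,1:]^k2 * [:a,1:]^k3"

lemma degree_node_poly: "degree (node_poly a k1 k2 k3) = k1 + k2 + k3"
  by (simp add: node_poly_def degree_mult_eq degree_power_eq)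

lemma lead_coeff_node_poly: "lead_coeff (node_poly a k1 k2 k3) = 1"
  by (simp add: node_poly_def lead_coeff_mult lead_coeff_power)

lemma coprime_linear_poly: assumes "c \<noteq> d" shows "coprime [:-c,1:] ([:-d,1:] :: real poly)"
proof (rule coprimeI)
  fix e assume "e dvd [:-c,1:]" "e dvd [:-d,1:]"
  then have "e dvd [:d - c:]" using dvd_diff[of e "[:-c,1:]" "[:-d,1:]"] by simp
  moreover have "is_unit [:d - c:]" using assms by (simp add: is_unit_const_poly_iff dvd_field_iff)
  ultimately show "is_unit e" by (rule dvd_unit_imp_unit)
qed

lemma node_poly_dvd_iff: assumes "a \<noteq> 0"
  shows "node_poly a k1 k2 k3 dvd G \<longleftrightarrow> [:-a,1:]^k1 dvd G \<and> [:0,1:]^k2 dvd G \<and> [:a,1:]^k3 dvd G"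
proof
  assume "node_poly a k1 k2 k3 dvd G"
  then show "[:-a,1:]^k1 dvd G \<and> [:0,1:]^k2 dvd G \<and> [:a,1:]^k3 dvd G"
    unfolding node_poly_def by (meson dvd_mult_left dvd_mult_right)
next
  assume h: "[:-a,1:]^k1 dvd G \<and> [:0,1:]^k2 dvd G \<and> [:a,1:]^k3 dvd G"
  have "coprime [:-a,1:] [:0,1:]" "coprime [:-a,1:] [:a,1:]" "coprime [:0,1:] [:a,1:]"
    using coprime_linear_poly[of a 0] coprime_linear_poly[of a "-a"] coprime_linear_poly[of 0 "-a"] assms
    by simp_all
  then have "coprime ([:-a,1:]^k1 * [:0,1:]^k2) ([:a,1:]^k3)" "coprime ([:-a,1:]^k1) ([:0,1:]^k2)"
    by simp_all
  then show "node_poly a k1 k2 k3 dvd G"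
    unfolding node_poly_def using h by (simp add: divides_mult)
qed

lemma mop_conditions_iff: assumes "a \<noteq> 0" "N > 0"
  shows "(\<forall>j\<in>{1,2,3}. \<forall>k < sel j k1 k2 k3. (\<integral>x. poly p x * x^k * wt a N j x \<partial>lborel) = 0)
    \<longleftrightarrow> node_poly a k1 k2 k3 dvd heat N p"
  using gauss_orthogonal_iff_dvd_heat[OF assms(2), of k1 p a] gauss_orthogonal_iff_dvd_heat[OF assms(2), of k2 p 0]
    gauss_orthogonal_iff_dvd_heat[OF assms(2), of k3 p "-a"]
  by (simp add: node_poly_dvd_iff[OF assms(1)] wt_eq_gauss sel_def shift_def)

lemma dvd_degree_lead_coeff_eq:
  fixes G Q :: "'a::idom poly"
  assumes "Q dvd G" "degree G = degree Q" "lead_coeff G = lead_coeff Q" "Q \<noteq> 0"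
  shows "G = Q"
proof -
  obtain r where G: "G = Q * r" using assms(1) by blast
  have "r \<noteq> 0" using G assms(3,4) by auto
  then have "degree r = 0" using G assms(2,4) by (simp add: degree_mult_eq)
  then have "r = [:coeff r 0:]" by (rule degree_0_id[symmetric])
  moreover have "coeff r 0 = 1"
    using assms(3,4) \<open>degree r = 0\<close> by (simp add: G lead_coeff_mult)
  ultimately show ?thesis using G by (metis mult.right_neutral one_pCons)
qed

lemma pderiv_power_product:
  fixes A B C :: "'a::idom poly"
  assumes "pderiv A = 1" "pderiv B = 1" "pderiv C = 1"
  shows "pderiv (A^Suc m1 * B^Suc m2 * C^Suc m3) =
      smult (of_nat (Suc m1)) (A^m1 * B^Suc m2 * C^Suc m3)
    + smult (of_nat (Suc m2)) (A^Suc m1 * B^m2 * C^Suc m3)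
    + smult (of_nat (Suc m3)) (A^Suc m1 * B^Suc m2 * C^m3)"
  by (simp only: pderiv_mult pderiv_power_Suc assms) (simp add: algebra_simps)

lemma heat_mop: assumes "a \<noteq> 0" "N > 0"
  shows "heat N (mop a N k1 k2 k3) = node_poly a k1 k2 k3"
proof -
  obtain p0 where p0: "heat N p0 = node_poly a k1 k2 k3" using heat_surj by blast
  have node0: "node_poly a k1 k2 k3 \<noteq> 0"
    using lead_coeff_node_poly[of a k1 k2 k3] by auto
  let ?P = "\<lambda>p. degree p = k1 + k2 + k3 \<and> lead_coeff p = 1 \<and>
      (\<forall>j\<in>{1,2,3}. \<forall>k < sel j k1 k2 k3. (\<integral>x. poly p x * x ^ k * wt a N j x \<partial>lborel) = 0)"
  have "?P p \<longleftrightarrow> p = p0" for p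
  proof
    assume P: "?P p"
    then have "node_poly a k1 k2 k3 dvd heat N p" using mop_conditions_iff[OF assms, of k1 k2 k3 p] by blast
    moreover have "degree (heat N p) = degree (node_poly a k1 k2 k3)"
      using P by (simp add: degree_heat degree_node_poly)
    moreover have "lead_coeff (heat N p) = lead_coeff (node_poly a k1 k2 k3)"
      using P by (metis lead_coeff_heat lead_coeff_node_poly)
    ultimately have "heat N p = node_poly a k1 k2 k3"
      using node0 by (rule dvd_degree_lead_coeff_eq)
    with p0 show "p = p0" using heat_inj[of N p p0] by simp
  next
    assume "p = p0"
    moreover have "degree p0 = k1 + k2 + k3" by (metis degree_heat degree_node_poly p0)
    moreover have "lead_coeff p0 = 1" by (metis lead_coeff_heat lead_coeff_node_poly p0)
    moreover have "node_poly a k1 k2 k3 dvd heat N p0" by (simp add: p0)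
    ultimately show "?P p" using mop_conditions_iff[OF assms, of k1 k2 k3 p0] by blast
  qed
  then have "mop a N k1 k2 k3 = p0" unfolding mop_def by simp
  with p0 show ?thesis by simp
qed

lemma gauss_deriv_0_eq:
  assumes N0: "N \<noteq> 0" and heat_PQ: "heat N P = [:-c,1:] * heat N Q"
  shows "gauss_deriv N 0 Q = smult (-N) P + smult (-N*c) Q"
proof (rule heat_inj)
  have "gauss_deriv N 0 Q = pderiv Q - smult N ([:0,1:] * Q)" by (simp add: gauss_deriv_def)
  then have "heat N (gauss_deriv N 0 Q) = pderiv (heat N Q) - smult N (heat_x N (heat N Q))"
    by (simp only: heat_diff heat_smult heat_pderiv heat_mult_x[OF N0])
  also have "\<dots> = smult (-N) ([:0,1:] * heat N Q)"
    using N0 by (simp add: heat_x_def smult_add_right)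
  also have "\<dots> = smult (-N) ([:-c,1:] * heat N Q) + smult (-N*c) (heat N Q)"
    by (simp add: smult_add_right smult_diff_right)
  also have "\<dots> = heat N (smult (-N) P + smult (-N*c) Q)"
    by (simp only: heat_add heat_smult heat_PQ)
  finally show "heat N (gauss_deriv N 0 Q) = heat N (smult (-N) P + smult (-N*c) Q)" .
qed

context
  fixes a N :: real
  assumes a: "a \<noteq> 0" and N: "N > 0"
begin

lemma pderiv_mop:
  "pderiv (mop a N (Suc m1) (Suc m2) (Suc m3)) =
      smult (of_nat (Suc m1)) (mop a N m1 (Suc m2) (Suc m3))
    + smult (of_nat (Suc m2)) (mop a N (Suc m1) m2 (Suc m3))
    + smult (of_nat (Suc m3)) (mop a N (Suc m1) (Suc m2) m3)"
proof (rule heat_inj)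
  have "pderiv (node_poly a (Suc m1) (Suc m2) (Suc m3)) =
      smult (of_nat (Suc m1)) (node_poly a m1 (Suc m2) (Suc m3))
    + smult (of_nat (Suc m2)) (node_poly a (Suc m1) m2 (Suc m3))
    + smult (of_nat (Suc m3)) (node_poly a (Suc m1) (Suc m2) m3)"
    unfolding node_poly_def by (rule pderiv_power_product) (rule pderiv_linear_poly)+
  then show "heat N (pderiv (mop a N (Suc m1) (Suc m2) (Suc m3))) = heat N
      (smult (of_nat (Suc m1)) (mop a N m1 (Suc m2) (Suc m3))
    + smult (of_nat (Suc m2)) (mop a N (Suc m1) m2 (Suc m3))
    + smult (of_nat (Suc m3)) (mop a N (Suc m1) (Suc m2) m3))"
    by (simp only: heat_pderiv heat_add heat_smult heat_mop[OF a N])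
qed

lemma integral_mop_gauss: assumes "j \<in> {1,2,3}"
  shows "(\<integral>x. poly (mop a N (Suc m1) (Suc m2) (Suc m3)) x * gauss N (shift a j) x \<partial>lborel) = 0"
  using assms by (auto simp: integral_poly_gauss_heat[OF N] heat_mop[OF a N] node_poly_def shift_def)

lemma cc_nonzero:
  assumes "n1 \<ge> 1" "n2 \<ge> 1" "n3 \<ge> 1" "j \<in> {1,2,3}"
  shows "cc a N n1 n2 n3 j \<noteq> 0"
proof -
  have "hh a N 1 (n1 - 1) n2 n3 \<noteq> 0"
  proof -
    have "heat N (mop a N (n1 - 1) n2 n3) = [:-a,1:]^(n1 - 1) * ([:0,1:]^n2 * [:a,1:]^n3)"
      by (simp add: heat_mop[OF a N] node_poly_def mult.assoc)
    moreover have "poly ([:0,1:]^n2 * [:a,1:]^n3) a \<noteq> 0" using a by simp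
    ultimately show ?thesis
      using gauss_moment_nonzero[OF N] by (simp add: hh_def sel_def wt_eq_gauss shift_def)
  qed
  moreover have "hh a N 2 n1 (n2 - 1) n3 \<noteq> 0"
  proof -
    have "heat N (mop a N n1 (n2 - 1) n3) = [:-0,1:]^(n2 - 1) * ([:-a,1:]^n1 * [:a,1:]^n3)"
      by (simp add: heat_mop[OF a N] node_poly_def mult_ac)
    moreover have "poly ([:-a,1:]^n1 * [:a,1:]^n3) 0 \<noteq> 0" using a by simp
    ultimately show ?thesis
      using gauss_moment_nonzero[OF N] by (simp add: hh_def sel_def wt_eq_gauss shift_def)
  qed
  moreover have "hh a N 3 n1 n2 (n3 - 1) \<noteq> 0"
  proof -
    have "heat N (mop a N n1 n2 (n3 - 1)) = [:-(-a),1:]^(n3 - 1) * ([:-a,1:]^n1 * [:0,1:]^n2)"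
      by (simp add: heat_mop[OF a N] node_poly_def mult_ac)
    moreover have "poly ([:-a,1:]^n1 * [:0,1:]^n2) (-a) \<noteq> 0" using a by simp
    ultimately show ?thesis
      using gauss_moment_nonzero[OF N] by (simp add: hh_def sel_def wt_eq_gauss shift_def)
  qed
  ultimately show ?thesis using assms(4) by (auto simp: cc_def)
qed

end

section \<open>Cauchy transforms of Gaussian-weighted polynomials\<close>

definition cauchy_gauss :: "real \<Rightarrow> real \<Rightarrow> real poly \<Rightarrow> complex \<Rightarrow> complex" where
  "cauchy_gauss N c p z = (\<integral>s. complex_of_real (poly p s * gauss N c s) / (of_real s - z) \<partial>lborel)"

lemma abs_Im_le_norm_of_real_minus: "\<bar>Im z\<bar> \<le> cmod (of_real s - z)"
  using abs_Im_le_cmod[of "of_real s - z"] by simp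

lemma of_real_minus_nonzero: "Im z \<noteq> 0 \<Longrightarrow> complex_of_real s - z \<noteq> 0"
  using abs_Im_le_norm_of_real_minus[of z s] by auto

lemma integrable_poly_gauss_mult_bounded:
  fixes h :: "real \<Rightarrow> complex"
  assumes "N > 0" "continuous_on UNIV h" "\<And>s. cmod (h s) \<le> B"
  shows "integrable lborel (\<lambda>s. complex_of_real (poly p s * gauss N c s) * h s)"
proof (rule Bochner_Integration.integrable_bound)
  show "integrable lborel (\<lambda>s. B * (poly p s * gauss N c s))"
    by (intro integrable_mult_right integrable_poly_gauss[OF assms(1)])
  have B: "B \<ge> 0" using assms(3)[of 0] norm_ge_zero order_trans by blast
  show "AE s in lborel. norm (complex_of_real (poly p s * gauss N c s) * h s) \<le> norm (B * (poly p s * gauss N c s))"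
  proof (rule AE_I2)
    fix s
    have "norm (complex_of_real (poly p s * gauss N c s) * h s) = \<bar>poly p s * gauss N c s\<bar> * cmod (h s)"
      by (simp only: norm_mult norm_of_real)
    also have "\<dots> \<le> \<bar>poly p s * gauss N c s\<bar> * B" by (intro mult_left_mono assms(3)) simp
    also have "\<dots> = norm (B * (poly p s * gauss N c s))" using B by (simp add: abs_mult)
    finally show "norm (complex_of_real (poly p s * gauss N c s) * h s) \<le> norm (B * (poly p s * gauss N c s))" .
  qed
  show "(\<lambda>s. complex_of_real (poly p s * gauss N c s) * h s) \<in> borel_measurable lborel"
    using assms(2) unfolding gauss_def by (auto intro!: borel_measurable_continuous_onI continuous_intros)
qed

lemma integrable_poly_gauss_div_power:
  assumes "N > 0" "Im z \<noteq> 0"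
  shows "integrable lborel (\<lambda>s. complex_of_real (poly p s * gauss N c s) / (of_real s - z)^k)"
proof -
  have "integrable lborel (\<lambda>s. complex_of_real (poly p s * gauss N c s) * (1 / (of_real s - z)^k))"
  proof (rule integrable_poly_gauss_mult_bounded[OF assms(1)])
    show "continuous_on UNIV (\<lambda>s. 1 / (complex_of_real s - z)^k)"
      using of_real_minus_nonzero[OF assms(2)] by (intro continuous_intros) auto
    show "cmod (1 / (complex_of_real s - z)^k) \<le> 1 / \<bar>Im z\<bar>^k" for s
      using abs_Im_le_norm_of_real_minus[of z s] assms(2)
      by (simp add: norm_divide norm_power frac_le power_mono)
  qed
  then show ?thesis by simp
qed

lemma cauchy_gauss_add: assumes "N > 0" "Im z \<noteq> 0"
  shows "cauchy_gauss N c (p + q) z = cauchy_gauss N c p z + cauchy_gauss N c q z"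
proof -
  have "cauchy_gauss N c (p + q) z = (\<integral>s. complex_of_real (poly p s * gauss N c s) / (of_real s - z)
        + complex_of_real (poly q s * gauss N c s) / (of_real s - z) \<partial>lborel)"
    unfolding cauchy_gauss_def
    by (rule Bochner_Integration.integral_cong) (auto simp: algebra_simps add_divide_distrib)
  also have "\<dots> = cauchy_gauss N c p z + cauchy_gauss N c q z"
    unfolding cauchy_gauss_def
    using integrable_poly_gauss_div_power[OF assms, where k=1] by (simp add: Bochner_Integration.integral_add)
  finally show ?thesis .
qed

lemma cauchy_gauss_smult: "cauchy_gauss N c (smult r p) z = of_real r * cauchy_gauss N c p z"
  unfolding cauchy_gauss_def by (simp add: mult.assoc flip: integral_mult_right_zero)

lemma cauchy_gauss_mult_x: assumes "N > 0" "Im z \<noteq> 0"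
  shows "cauchy_gauss N c ([:0,1:] * p) z = z * cauchy_gauss N c p z + of_real (\<integral>s. poly p s * gauss N c s \<partial>lborel)"
proof -
  define f where "f s = complex_of_real (poly p s * gauss N c s)" for s
  have e: "complex_of_real (poly ([:0,1:] * p) s * gauss N c s) / (of_real s - z) = f s + z * (f s / (of_real s - z))" for s
    using of_real_minus_nonzero[OF assms(2), of s] by (simp add: f_def field_simps)
  have i1: "integrable lborel f"
    unfolding f_def by (simp only: complex_of_real_integrable_eq integrable_poly_gauss[OF assms(1)])
  have i2: "integrable lborel (\<lambda>s. z * (f s / (of_real s - z)))"
    using integrable_mult_right[OF integrable_poly_gauss_div_power[OF assms, where k=1], of z]
    unfolding f_def by simp
  have "cauchy_gauss N c ([:0,1:] * p) z = (\<integral>s. f s + z * (f s / (of_real s - z)) \<partial>lborel)"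
    unfolding cauchy_gauss_def e ..
  also have "\<dots> = (\<integral>s. f s \<partial>lborel) + (\<integral>s. z * (f s / (of_real s - z)) \<partial>lborel)"
    by (rule Bochner_Integration.integral_add[OF i1 i2])
  also have "(\<integral>s. z * (f s / (of_real s - z)) \<partial>lborel) = z * cauchy_gauss N c p z"
    unfolding cauchy_gauss_def f_def by (rule integral_mult_right_zero)
  also have "(\<integral>s. f s \<partial>lborel) = of_real (\<integral>s. poly p s * gauss N c s \<partial>lborel)"
    unfolding f_def by (rule integral_complex_of_real)
  finally show ?thesis by (simp only: add.commute)
qed

lemma gauss_deriv_eq_gauss_deriv_0: "gauss_deriv N c p = gauss_deriv N 0 p + smult (N * c) p"
  by (simp add: gauss_deriv_def smult_add_right smult_diff_right algebra_simps)

lemma integral_poly_gauss_div_square: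
  assumes N: "N > 0" and z: "Im z \<noteq> 0"
  shows "(\<integral>s. complex_of_real (poly p s * gauss N c s) / (of_real s - z)^2 \<partial>lborel)
       = cauchy_gauss N c (gauss_deriv N c p) z"
proof -
  define f where "f s = complex_of_real (poly p s * gauss N c s)" for s
  define f' where "f' s = complex_of_real (poly (gauss_deriv N c p) s * gauss N c s)" for s
  define F where "F s = f s / (of_real s - z)" for s
  have nz: "complex_of_real s - z \<noteq> 0" for s by (rule of_real_minus_nonzero[OF z])
  then have zs: "z \<noteq> complex_of_real s" for s by force
  have dF: "(F has_vector_derivative (f' s / (of_real s - z) - f s / (of_real s - z)^2)) (at s)" for s
  proof -
    have "(f has_vector_derivative f' s) (at s)"
      unfolding f_def f'_def by (intro has_vector_derivative_of_real has_real_derivative_poly_gauss)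
    moreover have "((\<lambda>s. 1 / (complex_of_real s - z)) has_vector_derivative (- 1 / (of_real s - z)^2)) (at s)"
      using nz[of s] by (intro has_vector_derivative_real_field)
        (auto intro!: derivative_eq_intros simp: power2_eq_square field_simps)
    ultimately show ?thesis
      unfolding F_def using has_vector_derivative_mult by (fastforce simp: field_simps)
  qed
  have i1: "integrable lborel (\<lambda>s. f s / (of_real s - z)^2)"
    and i2: "integrable lborel (\<lambda>s. f' s / (of_real s - z)^1)"
    unfolding f_def f'_def by (rule integrable_poly_gauss_div_power[OF N z])+
  have "((\<lambda>s. \<bar>poly p s * gauss N c s\<bar> / \<bar>Im z\<bar>) \<longlongrightarrow> 0) F'"
    if "((\<lambda>s. poly p s * gauss N c s) \<longlongrightarrow> 0) F'" for F'
    by (intro tendsto_divide_zero tendsto_rabs_zero that)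
  moreover have "norm (F s) \<le> \<bar>poly p s * gauss N c s\<bar> / \<bar>Im z\<bar>" for s
    unfolding F_def f_def norm_divide norm_of_real
    using abs_Im_le_norm_of_real_minus[of z s] z by (simp add: frac_le)
  note bound = always_eventually[OF allI, OF this] calculation
  have "(F \<longlongrightarrow> 0) at_top" "(F \<longlongrightarrow> 0) at_bot"
    using Lim_null_comparison[OF bound(1) bound(2)] tendsto_poly_gauss[OF N] by auto
  then have "(\<integral>s. f' s / (of_real s - z) - f s / (of_real s - z)^2 \<partial>lborel) = 0"
    using i1 i2 unfolding f_def f'_def gauss_def
    by (intro integral_lborel_derivative_eq_0[OF dF[unfolded f_def f'_def gauss_def]])
      (auto intro!: continuous_intros Bochner_Integration.integrable_diff simp: zs)
  then show ?thesis
    using i1 i2 by (simp add: cauchy_gauss_def f_def f'_def Bochner_Integration.integral_diff)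
qed

lemma norm_cauchy_kernel_diff_le:
  assumes "Im z \<noteq> 0" "cmod (w - z) < \<bar>Im z\<bar> / 2"
  shows "cmod ((w - z) / ((of_real s - w) * (of_real s - z)^2)) \<le> cmod (w - z) * (2 / \<bar>Im z\<bar>^3)"
proof -
  define d where "d = \<bar>Im z\<bar>"
  have d0: "d > 0" using assms(1) by (simp add: d_def)
  have "\<bar>Im w - Im z\<bar> \<le> cmod (w - z)" using abs_Im_le_cmod[of "w - z"] by simp
  then have "d / 2 \<le> cmod (of_real s - w)"
    using abs_Im_le_norm_of_real_minus[of w s] assms(2) unfolding d_def by linarith
  moreover have "d \<le> cmod (of_real s - z)" using abs_Im_le_norm_of_real_minus[of z s] by (simp add: d_def)
  ultimately have le: "d / 2 * d^2 \<le> cmod (of_real s - w) * cmod (of_real s - z)^2"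
    using d0 by (intro mult_mono power_mono) auto
  moreover have "0 < d / 2 * d^2" using d0 by simp
  ultimately have "0 < cmod (of_real s - w) * cmod (of_real s - z)^2 * (d / 2 * d^2)"
    by (metis mult_pos_pos order_less_le_trans)
  then have "cmod (w - z) / (cmod (of_real s - w) * cmod (of_real s - z)^2) \<le> cmod (w - z) / (d / 2 * d^2)"
    by (rule divide_left_mono[OF le norm_ge_zero])
  also have "\<dots> = cmod (w - z) * (2 / d^3)" by (simp add: power2_eq_square power3_eq_cube)
  finally show ?thesis unfolding d_def by (simp add: norm_divide norm_mult norm_power)
qed

lemma cauchy_gauss_diff_quotient:
  assumes N: "N > 0" and z: "Im z \<noteq> 0" and w: "Im w \<noteq> 0" "w \<noteq> z"
  shows "(cauchy_gauss N c p w - cauchy_gauss N c p z) / (w - z)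
           - (\<integral>s. complex_of_real (poly p s * gauss N c s) / (of_real s - z)^2 \<partial>lborel)
         = (\<integral>s. complex_of_real (poly p s * gauss N c s) * ((w - z) / ((of_real s - w) * (of_real s - z)^2)) \<partial>lborel)"
proof -
  define f where "f s = complex_of_real (poly p s * gauss N c s)" for s
  have iw: "integrable lborel (\<lambda>s. f s / (of_real s - w)^1)"
    and iz: "integrable lborel (\<lambda>s. f s / (of_real s - z)^1)"
    and iz2: "integrable lborel (\<lambda>s. f s / (of_real s - z)^2)"
    unfolding f_def using integrable_poly_gauss_div_power N z w by blast+
  have alg: "(g/u - g/v)/(v - u) - g/v^2 = g * ((v - u) / (u * v^2))"
    if "u \<noteq> 0" "v \<noteq> 0" "v - u \<noteq> 0" for g u v :: complex
  proof -
    have "(g/u - g/v)/(v - u) = g/(u * v)" using that by (simp add: field_simps)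
    moreover have "g/(u * v) - g/v^2 = g * ((v - u) / (u * v^2))"
      using that by (simp add: field_simps power2_eq_square)
    ultimately show ?thesis by simp
  qed
  have "(f s / (of_real s - w) - f s / (of_real s - z)) / (w - z) - f s / (of_real s - z)^2
      = f s * ((w - z) / ((of_real s - w) * (of_real s - z)^2))" for s
    using alg[OF of_real_minus_nonzero[OF w(1), of s] of_real_minus_nonzero[OF z, of s], of "f s"] w(2)
    by simp
  moreover have "(cauchy_gauss N c p w - cauchy_gauss N c p z) / (w - z) - (\<integral>s. f s / (of_real s - z)^2 \<partial>lborel)
      = (\<integral>s. (f s / (of_real s - w) - f s / (of_real s - z)) / (w - z) - f s / (of_real s - z)^2 \<partial>lborel)"
    using iw iz iz2 unfolding cauchy_gauss_def f_def[symmetric]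
    by (simp add: Bochner_Integration.integral_diff Bochner_Integration.integrable_diff)
  ultimately show ?thesis unfolding f_def by simp
qed

lemma norm_cauchy_gauss_diff_quotient_le:
  assumes N: "N > 0" and z: "Im z \<noteq> 0" and w: "w \<noteq> z" "cmod (w - z) < \<bar>Im z\<bar> / 2"
  shows "norm ((cauchy_gauss N c p w - cauchy_gauss N c p z) / (w - z)
           - (\<integral>s. complex_of_real (poly p s * gauss N c s) / (of_real s - z)^2 \<partial>lborel))
         \<le> (\<integral>s. \<bar>poly p s * gauss N c s\<bar> \<partial>lborel) * (2 / \<bar>Im z\<bar>^3) * cmod (w - z)"
proof -
  have "\<bar>Im w - Im z\<bar> \<le> cmod (w - z)" using abs_Im_le_cmod[of "w - z"] by simp
  then have wI: "Im w \<noteq> 0" using w(2) by linarith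
  define h where "h s = (w - z) / ((of_real s - w) * (of_real s - z)^2)" for s
  have hb: "cmod (h s) \<le> cmod (w - z) * (2 / \<bar>Im z\<bar>^3)" for s
    unfolding h_def by (rule norm_cauchy_kernel_diff_le[OF z w(2)])
  have "continuous_on UNIV h"
    unfolding h_def using of_real_minus_nonzero[OF z] of_real_minus_nonzero[OF wI]
    by (intro continuous_intros) auto
  then have ih: "integrable lborel (\<lambda>s. complex_of_real (poly p s * gauss N c s) * h s)"
    by (rule integrable_poly_gauss_mult_bounded[OF N _ hb])
  have "norm ((cauchy_gauss N c p w - cauchy_gauss N c p z) / (w - z)
           - (\<integral>s. complex_of_real (poly p s * gauss N c s) / (of_real s - z)^2 \<partial>lborel))
      = norm (\<integral>s. complex_of_real (poly p s * gauss N c s) * h s \<partial>lborel)"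
    unfolding h_def cauchy_gauss_diff_quotient[OF N z wI w(1)] ..
  also have "\<dots> \<le> (\<integral>s. \<bar>poly p s * gauss N c s\<bar> * (cmod (w - z) * (2 / \<bar>Im z\<bar>^3)) \<partial>lborel)"
  proof (rule Bochner_Integration.integral_norm_bound_integral[OF ih])
    show "integrable lborel (\<lambda>s. \<bar>poly p s * gauss N c s\<bar> * (cmod (w - z) * (2 / \<bar>Im z\<bar>^3)))"
      by (intro integrable_mult_left integrable_abs integrable_poly_gauss[OF N])
    show "norm (complex_of_real (poly p s * gauss N c s) * h s)
        \<le> \<bar>poly p s * gauss N c s\<bar> * (cmod (w - z) * (2 / \<bar>Im z\<bar>^3))" for s
      unfolding norm_mult norm_of_real by (intro mult_left_mono hb) simp
  qed
  finally show ?thesis by (simp add: mult_ac)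
qed

lemma has_field_derivative_cauchy_gauss:
  assumes N: "N > 0" and z: "Im z \<noteq> 0"
  shows "(cauchy_gauss N c p has_field_derivative cauchy_gauss N c (gauss_deriv N c p) z) (at z)"
proof -
  define D where "D = (\<integral>s. complex_of_real (poly p s * gauss N c s) / (of_real s - z)^2 \<partial>lborel)"
  define K where "K = (\<integral>s. \<bar>poly p s * gauss N c s\<bar> \<partial>lborel) * (2 / \<bar>Im z\<bar>^3)"
  have "\<forall>\<^sub>F w in at z. norm ((cauchy_gauss N c p w - cauchy_gauss N c p z) / (w - z) - D) \<le> K * cmod (w - z)"
    unfolding eventually_at D_def K_def using z norm_cauchy_gauss_diff_quotient_le[OF N z]
    by (intro exI[of _ "\<bar>Im z\<bar> / 2"]) (auto simp: dist_norm)
  moreover have "((\<lambda>w. K * cmod (w - z)) \<longlongrightarrow> K * cmod (z - z)) (at z)"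
    by (intro tendsto_intros)
  then have "((\<lambda>w. K * cmod (w - z)) \<longlongrightarrow> 0) (at z)" by simp
  ultimately have "((\<lambda>w. (cauchy_gauss N c p w - cauchy_gauss N c p z) / (w - z) - D) \<longlongrightarrow> 0) (at z)"
    by (rule Lim_null_comparison)
  then have "((\<lambda>w. (cauchy_gauss N c p w - cauchy_gauss N c p z) / (w - z)) \<longlongrightarrow> D) (at z)"
    by (rule LIM_zero_cancel)
  then show ?thesis
    unfolding has_field_derivative_iff D_def integral_poly_gauss_div_square[OF N z] .
qed

section \<open>The entries of \<open>\<Psi>\<close>\<close>

lemma map_poly_of_real_add:
  "(map_poly of_real (p + q) :: complex poly) = map_poly of_real p + map_poly of_real q"
  by (rule poly_eqI) (simp add: coeff_map_poly)

lemma map_poly_of_real_diff: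
  "(map_poly of_real (p - q) :: complex poly) = map_poly of_real p - map_poly of_real q"
  by (rule poly_eqI) (simp add: coeff_map_poly)

lemma map_poly_of_real_smult:
  "(map_poly of_real (smult r p) :: complex poly) = smult (of_real r) (map_poly of_real p)"
  by (rule poly_eqI) (simp add: coeff_map_poly)

lemma map_poly_of_real_mult_x:
  "(map_poly of_real ([:0,1:] * p) :: complex poly) = [:0,1:] * map_poly of_real p"
  by (rule poly_eqI) (simp add: coeff_map_poly coeff_pCons split: nat.split)

lemma map_poly_of_real_pderiv:
  "(map_poly of_real (pderiv p) :: complex poly) = pderiv (map_poly of_real p)"
  by (rule poly_eqI) (simp add: coeff_map_poly coeff_pderiv)

text \<open>Entry \<open>(i, j)\<close> of \<open>\<Psi>\<close> is \<open>psi_entry a N j P\<^sub>i\<close>, where \<open>P\<^sub>i\<close> is the polynomial of row \<open>i\<close>: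
  the row factors \<open>c\<^sub>i\<close> of \<open>Y\<close> are cancelled by \<open>diag(1, c\<^sub>1\<^sup>-\<^sup>1, c\<^sub>2\<^sup>-\<^sup>1, c\<^sub>3\<^sup>-\<^sup>1)\<close>.\<close>
definition psi_entry :: "real \<Rightarrow> real \<Rightarrow> nat \<Rightarrow> real poly \<Rightarrow> complex \<Rightarrow> complex" where
  "psi_entry a N j p w = (if j = 0 then poly (map_poly of_real p) w * exp (- of_real N * w^2 / 2)
     else (1 / (2 * of_real pi * \<i>)) * cauchy_gauss N (shift a j) p w * exp (- of_real N * of_real (shift a j) * w))"

lemma psi_entry_add: assumes "N > 0" "Im w \<noteq> 0"
  shows "psi_entry a N j (p + q) w = psi_entry a N j p w + psi_entry a N j q w"
  by (simp add: psi_entry_def map_poly_of_real_add cauchy_gauss_add[OF assms] algebra_simps)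

lemma psi_entry_smult: "psi_entry a N j (smult r p) w = of_real r * psi_entry a N j p w"
  by (simp add: psi_entry_def map_poly_of_real_smult cauchy_gauss_smult)

lemma psi_entry_diff: assumes "N > 0" "Im w \<noteq> 0"
  shows "psi_entry a N j (p - q) w = psi_entry a N j p w - psi_entry a N j q w"
  using psi_entry_add[OF assms, of a j p "smult (-1) q"] psi_entry_smult[of a N j "-1" q w] by simp

lemma psi_entry_mult_x:
  assumes "N > 0" "Im w \<noteq> 0" "j = 0 \<or> (\<integral>s. poly p s * gauss N (shift a j) s \<partial>lborel) = 0"
  shows "psi_entry a N j ([:0,1:] * p) w = w * psi_entry a N j p w"
proof (cases "j = 0")
  case True
  then show ?thesis unfolding psi_entry_def map_poly_of_real_mult_x by simp
next
  case False
  then show ?thesis using assms(3) unfolding psi_entry_def cauchy_gauss_mult_x[OF assms(1,2)] by simp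
qed

lemma has_field_derivative_psi_entry:
  assumes N: "N > 0" and z: "Im z \<noteq> 0"
  shows "(psi_entry a N j p has_field_derivative psi_entry a N j (gauss_deriv N 0 p) z) (at z)"
proof (cases "j = 0")
  case True
  define q where "q = (map_poly of_real p :: complex poly)"
  have eq: "(map_poly of_real (gauss_deriv N 0 p) :: complex poly) = pderiv q - smult (of_real N) ([:0,1:] * q)"
    unfolding gauss_deriv_def q_def
    by (simp only: minus_zero map_poly_of_real_diff map_poly_of_real_smult map_poly_of_real_mult_x
        map_poly_of_real_pderiv)
  have "psi_entry a N j (gauss_deriv N 0 p) z
      = poly (pderiv q - smult (of_real N) ([:0,1:] * q)) z * exp (- of_real N * z^2 / 2)"
    unfolding psi_entry_def eq using True by simp
  also have "\<dots> = poly (pderiv q) z * exp (- of_real N * z^2 / 2) + exp (- of_real N * z^2 / 2) * (- of_real N * z) * poly q z"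
    by (simp add: algebra_simps)
  finally have "psi_entry a N j (gauss_deriv N 0 p) z = \<dots>" .
  moreover have "((\<lambda>w. poly q w * exp (- of_real N * w^2 / 2)) has_field_derivative
      poly (pderiv q) z * exp (- of_real N * z^2 / 2) + exp (- of_real N * z^2 / 2) * (- of_real N * z) * poly q z) (at z)"
    by (auto intro!: derivative_eq_intros poly_DERIV simp: power2_eq_square algebra_simps)
  moreover have "psi_entry a N j p = (\<lambda>w. poly q w * exp (- of_real N * w^2 / 2))"
    using True by (simp add: psi_entry_def q_def fun_eq_iff)
  ultimately show ?thesis by simp
next
  case False
  define c where "c = shift a j"
  define K where "K = 1 / (2 * of_real pi * \<i>)"
  define E where "E w = exp (- of_real N * of_real c * w)" for w :: complex
  have "psi_entry a N j (gauss_deriv N 0 p) z = K * cauchy_gauss N c (gauss_deriv N 0 p) z * E z"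
    using False by (simp add: psi_entry_def K_def c_def E_def)
  also have "\<dots> = K * cauchy_gauss N c (gauss_deriv N c p) z * E z + E z * (- of_real N * of_real c) * (K * cauchy_gauss N c p z)"
    unfolding gauss_deriv_eq_gauss_deriv_0[of N c p] cauchy_gauss_add[OF N z] cauchy_gauss_smult
    by (simp add: algebra_simps)
  finally have "psi_entry a N j (gauss_deriv N 0 p) z = \<dots>" .
  moreover have "((\<lambda>w. K * cauchy_gauss N c p w * E w) has_field_derivative
      K * cauchy_gauss N c (gauss_deriv N c p) z * E z + E z * (- of_real N * of_real c) * (K * cauchy_gauss N c p z)) (at z)"
    unfolding E_def
    by (auto intro!: derivative_eq_intros has_field_derivative_cauchy_gauss[OF N z] simp: algebra_simps)
  moreover have "psi_entry a N j p = (\<lambda>w. K * cauchy_gauss N c p w * E w)"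
    using False by (simp add: psi_entry_def K_def c_def E_def fun_eq_iff)
  ultimately show ?thesis by simp
qed

lemma sum_lessThan_4: "(\<Sum>k<4::nat. f k) = f 0 + f 1 + f 2 + (f 3 :: 'a::comm_monoid_add)"
  by (simp add: eval_nat_numeral)

lemma Psi_eq_psi_entry:
  assumes "\<And>l. l \<in> {1,2,3} \<Longrightarrow> cc a N n1 n2 n3 l \<noteq> 0" and "k < 4" "l < 4"
  shows "Psi a N n1 n2 n3 w k l = psi_entry a N l (rowpoly a N n1 n2 n3 k) w"
proof -
  have "k \<in> {0,1,2,3}" "l \<in> {0,1,2,3}" using assms(2,3) by auto
  then have "mmul (diag4 d) A k l = d k * A k l" "mmul A (diag4 d) k l = A k l * d l" for d A
    by (auto simp: mmul_def sum_lessThan_4 diag4_def)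
  moreover have "(if k = 0 then 1 else inverse (cc a N n1 n2 n3 k)) * rowfac a N n1 n2 n3 k = 1"
    using assms(1)[of k] \<open>k \<in> {0,1,2,3}\<close> by (auto simp: rowfac_def)
  ultimately show ?thesis
    unfolding Psi_def Ymat_def psi_entry_def cauchy_tr_def cauchy_gauss_def wt_eq_gauss
    by (simp add: mult.assoc)
qed

lemma psi_entry_gauss_deriv_mop:
  assumes a: "a \<noteq> 0" and N: "N > 0" and z: "Im z \<noteq> 0" and j: "j < 4"
  shows "psi_entry a N j (gauss_deriv N 0 (mop a N (Suc m1) (Suc m2) (Suc m3))) z
    = of_nat (Suc m1) * psi_entry a N j (mop a N m1 (Suc m2) (Suc m3)) z
    + of_nat (Suc m2) * psi_entry a N j (mop a N (Suc m1) m2 (Suc m3)) z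
    + of_nat (Suc m3) * psi_entry a N j (mop a N (Suc m1) (Suc m2) m3) z
    - of_real N * (z * psi_entry a N j (mop a N (Suc m1) (Suc m2) (Suc m3)) z)"
proof -
  define P where "P = mop a N (Suc m1) (Suc m2) (Suc m3)"
  have "j = 0 \<or> j = 1 \<or> j = 2 \<or> j = 3" using j by auto
  then have "psi_entry a N j ([:0,1:] * P) z = z * psi_entry a N j P z"
    unfolding P_def using integral_mop_gauss[OF a N, of j] by (intro psi_entry_mult_x[OF N z]) auto
  moreover have "gauss_deriv N 0 P = pderiv P - smult N ([:0,1:] * P)" by (simp add: gauss_deriv_def)
  ultimately show ?thesis
    unfolding P_def pderiv_mop[OF a N]
    by (simp only: psi_entry_add[OF N z] psi_entry_diff[OF N z] psi_entry_smult) simp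
qed

lemma psi_entry_gauss_deriv_rowpoly:
  assumes a: "a \<noteq> 0" and N: "N > 0" and z: "Im z \<noteq> 0" and i: "i < 4" and j: "j < 4"
  shows "psi_entry a N j (gauss_deriv N 0 (rowpoly a N (Suc m1) (Suc m2) (Suc m3) i)) z
    = (\<Sum>k<4. Amat a N (Suc m1) (Suc m2) (Suc m3) z i k * psi_entry a N j (rowpoly a N (Suc m1) (Suc m2) (Suc m3) k) z)"
proof -
  define P where "P = mop a N (Suc m1) (Suc m2) (Suc m3)"
  define P1 where "P1 = mop a N m1 (Suc m2) (Suc m3)"
  define P2 where "P2 = mop a N (Suc m1) m2 (Suc m3)"
  define P3 where "P3 = mop a N (Suc m1) (Suc m2) m3"
  define \<psi> where "\<psi> q = psi_entry a N j q z" for q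
  have N0: "N \<noteq> 0" using N by simp
  have \<psi>_add: "\<psi> (p + q) = \<psi> p + \<psi> q" and \<psi>_smult: "\<psi> (smult r p) = of_real r * \<psi> p" for p q r
    unfolding \<psi>_def by (simp_all only: psi_entry_add[OF N z] psi_entry_smult)
  have heat_rows: "heat N P = [:-a,1:] * heat N P1" "heat N P = [:-0,1:] * heat N P2"
    "heat N P = [:-(-a),1:] * heat N P3"
    unfolding P_def P1_def P2_def P3_def heat_mop[OF a N] node_poly_def
    by (simp_all only: power_Suc mult_ac minus_zero minus_minus)
  have rows: "rowpoly a N (Suc m1) (Suc m2) (Suc m3) 0 = P" "rowpoly a N (Suc m1) (Suc m2) (Suc m3) 1 = P1"
    "rowpoly a N (Suc m1) (Suc m2) (Suc m3) 2 = P2" "rowpoly a N (Suc m1) (Suc m2) (Suc m3) 3 = P3"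
    by (simp_all add: rowpoly_def P_def P1_def P2_def P3_def)
  have rhs: "(\<Sum>k<4. Amat a N (Suc m1) (Suc m2) (Suc m3) z i k * psi_entry a N j (rowpoly a N (Suc m1) (Suc m2) (Suc m3) k) z)
      = Amat a N (Suc m1) (Suc m2) (Suc m3) z i 0 * \<psi> P + Amat a N (Suc m1) (Suc m2) (Suc m3) z i 1 * \<psi> P1
      + Amat a N (Suc m1) (Suc m2) (Suc m3) z i 2 * \<psi> P2 + Amat a N (Suc m1) (Suc m2) (Suc m3) z i 3 * \<psi> P3"
    unfolding sum_lessThan_4 rows \<psi>_def ..
  consider "i = 0" | "i = 1" | "i = 2" | "i = 3" using i by linarith
  then show ?thesis
  proof cases
    case 1
    have "\<psi> (gauss_deriv N 0 P)
        = of_nat (Suc m1) * \<psi> P1 + of_nat (Suc m2) * \<psi> P2 + of_nat (Suc m3) * \<psi> P3 - of_real N * (z * \<psi> P)"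
      unfolding \<psi>_def P_def P1_def P2_def P3_def by (rule psi_entry_gauss_deriv_mop[OF a N z j])
    then show ?thesis unfolding rhs unfolding 1 rows(1) \<psi>_def[symmetric] using N by (simp add: Amat_def algebra_simps)
  next
    case 2
    have "\<psi> (gauss_deriv N 0 P1) = - of_real N * \<psi> P - of_real N * of_real a * \<psi> P1"
      unfolding gauss_deriv_0_eq[OF N0 heat_rows(1)] \<psi>_add \<psi>_smult by simp
    then show ?thesis unfolding rhs unfolding 2 rows(2) \<psi>_def[symmetric] by (simp add: Amat_def)
  next
    case 3
    have "\<psi> (gauss_deriv N 0 P2) = - of_real N * \<psi> P"
      unfolding gauss_deriv_0_eq[OF N0 heat_rows(2)] \<psi>_add \<psi>_smult by simp
    then show ?thesis unfolding rhs unfolding 3 rows(3) \<psi>_def[symmetric] by (simp add: Amat_def)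
  next
    case 4
    have "\<psi> (gauss_deriv N 0 P3) = - of_real N * \<psi> P + of_real N * of_real a * \<psi> P3"
      unfolding gauss_deriv_0_eq[OF N0 heat_rows(3)] \<psi>_add \<psi>_smult by simp
    then show ?thesis unfolding rhs unfolding 4 rows(4) \<psi>_def[symmetric] by (simp add: Amat_def)
  qed
qed

theorem mainTheorem1:
  fixes a N :: real and n1 n2 n3 :: nat
  assumes "a > 0" and "N > 0" and "n1 \<ge> 1" and "n2 \<ge> 1" and "n3 \<ge> 1"
    and "z \<notin> \<real>"
  shows "\<forall>i<4. \<forall>j<4.
    ((\<lambda>w. Psi a N n1 n2 n3 w i j) has_field_derivative
       mmul (Amat a N n1 n2 n3 z) (Psi a N n1 n2 n3 z) i j) (at z)"
proof (intro allI impI)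
  fix i j :: nat assume i: "i < 4" and j: "j < 4"
  have a: "a \<noteq> 0" and z: "Im z \<noteq> 0" using assms(1,6) complex_is_Real_iff by auto
  obtain m1 m2 m3 where n: "n1 = Suc m1" "n2 = Suc m2" "n3 = Suc m3"
    using assms(3-5) by (auto simp: Suc_le_eq dest!: gr0_implies_Suc)
  have Psi: "Psi a N n1 n2 n3 w k j = psi_entry a N j (rowpoly a N n1 n2 n3 k) w" if "k < 4" for w k
    using Psi_eq_psi_entry[OF cc_nonzero[OF a assms(2-5)] that j] .
  have "mmul (Amat a N n1 n2 n3 z) (Psi a N n1 n2 n3 z) i j
      = (\<Sum>k<4. Amat a N n1 n2 n3 z i k * psi_entry a N j (rowpoly a N n1 n2 n3 k) z)"
    unfolding mmul_def using Psi by (intro sum.cong) auto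
  also have "\<dots> = psi_entry a N j (gauss_deriv N 0 (rowpoly a N n1 n2 n3 i)) z"
    unfolding n by (rule psi_entry_gauss_deriv_rowpoly[OF a assms(2) z i j, symmetric])
  moreover have "(\<lambda>w. Psi a N n1 n2 n3 w i j) = psi_entry a N j (rowpoly a N n1 n2 n3 i)"
    using Psi[OF i] by blast
  ultimately show "((\<lambda>w. Psi a N n1 n2 n3 w i j) has_field_derivative
       mmul (Amat a N n1 n2 n3 z) (Psi a N n1 n2 n3 z) i j) (at z)"
    using has_field_derivative_psi_entry[OF assms(2) z] by (simp only:)
qed

end
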